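(* Let $X_n$ be the maximum weight of a directed path from $1$ to $n$ in the transitive tournament on $\{1,\ldots,n\}$ with independent $\mathrm{Bernoulli}(1/2)$ edge weights. Then \[ \lim_{n\to\infty}\frac{\mathbb{E}[X_n]}{n-1}=\Big(\sum_{n\ge1}2^{-\binom{n}{2}}\Big)^{-1}=0.60914971106\ldots \]
   Context: The transitive tournament on $\{1,\ldots,n\}$ has a directed edge $(i,j)$ for every $1\le i<j\le n$. Each edge independently has weight $1$ with probability $1/2$ and weight $0$ otherwise. The weight of a path is the sum of its edge weights. *)

theory Defs
  imports Complex_Main
begin

definition tt_edges :: "nat \<Rightarrow> (nat \<times> nat) set" where
  "tt_edges n = {(i, j). 1 \<le> i \<and> i < j \<and> j \<le> n}"

definition tt_paths :: "nat \<Rightarrow> nat list set" where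
  "tt_paths n = {xs. xs \<noteq> [] \<and> hd xs = 1 \<and> last xs = n \<and> sorted_wrt (<) xs}"

definition path_weight :: "(nat \<times> nat) set \<Rightarrow> nat list \<Rightarrow> nat" where
  "path_weight S xs = sum_list (map (\<lambda>e. if e \<in> S then 1 else 0) (zip xs (tl xs)))"

text \<open>Maximum weight of a directed path from 1 to n (the random variable X_n, as a function
  of the set S of weight-1 edges).\<close>
definition max_path_weight :: "nat \<Rightarrow> (nat \<times> nat) set \<Rightarrow> nat" where
  "max_path_weight n S = Max (path_weight S ` tt_paths n)"

text \<open>Expectation of X_n: with independent Bernoulli(1/2) weights, the set of weight-1 edges
  is uniformly distributed over all subsets of the edge set.\<close>
definition expected_max_weight :: "nat \<Rightarrow> real" where
  "expected_max_weight n =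
     (\<Sum>S\<in>Pow (tt_edges n). real (max_path_weight n S)) / 2 ^ card (tt_edges n)"

end

theory Submission
  imports Defs "HOL-Real_Asymp.Real_Asymp"
begin

text \<open>Write X(j) for the maximum weight of a path from 1 to j and R(n) for the least
  j \<le> n with X(j) = X(n); then X(j) = X(n) on [R(n), n] and X(j) < X(n) below R(n). Hence
  X(n + 1) = X(n) + 1 and R(n + 1) = n + 1 exactly when one of the n + 1 - R(n) edges from
  [R(n), n] to n + 1 has weight 1, and otherwise nothing changes. These edges are independent
  of the past, so with u(k) = P(R(k) = k) one gets P(R(n) = \<rho>) = u(\<rho>) q(n - \<rho>), where
  q(t) = 2^-(t + 1 choose 2) is the probability that R stays put for t steps. Summing over \<rho>
  gives the renewal equation \<Sum>\<rho> u(\<rho>) q(n - \<rho>) = 1, while E X(n) = u(2) + ... + u(n).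
  Bounding q in the renewal equation by its partial sums from above and by its full sum from
  below yields (u(1) + ... + u(n)) / n \<longrightarrow> 1 / \<Sum>t q(t).\<close>

section \<open>Averages over subsets of a finite set\<close>

definition pow_avg :: "'a set \<Rightarrow> ('a set \<Rightarrow> real) \<Rightarrow> real" where
  "pow_avg A f = (\<Sum>S\<in>Pow A. f S) / 2 ^ card A"

lemma pow_avg_cong: "(\<And>S. S \<subseteq> A \<Longrightarrow> f S = g S) \<Longrightarrow> pow_avg A f = pow_avg A g"
  unfolding pow_avg_def by (metis PowD sum.cong)

lemma pow_avg_add: "pow_avg A (\<lambda>S. f S + g S) = pow_avg A f + pow_avg A g"
  unfolding pow_avg_def by (simp add: sum.distrib add_divide_distrib)

lemma pow_avg_mult_left: "pow_avg A (\<lambda>S. c * f S) = c * pow_avg A f"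
  unfolding pow_avg_def by (simp add: sum_distrib_left)

lemma pow_avg_divide: "pow_avg A (\<lambda>S. f S / c) = pow_avg A f / c"
  unfolding pow_avg_def by (simp add: sum_divide_distrib[symmetric])

lemma pow_avg_sum: "pow_avg A (\<lambda>S. \<Sum>k\<in>K. f k S) = (\<Sum>k\<in>K. pow_avg A (f k))"
  unfolding pow_avg_def by (simp add: sum_divide_distrib[symmetric] sum.swap[of _ K])

lemma pow_avg_const: "finite A \<Longrightarrow> pow_avg A (\<lambda>S. c) = c"
  unfolding pow_avg_def by (simp add: card_Pow)

lemma pow_avg_nonneg: "(\<And>S. 0 \<le> f S) \<Longrightarrow> 0 \<le> pow_avg A f"
  unfolding pow_avg_def by (intro divide_nonneg_pos sum_nonneg) auto

lemma pow_avg_Un: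
  assumes "finite A" "finite B" "A \<inter> B = {}"
  shows "pow_avg (A \<union> B) f = pow_avg A (\<lambda>X. pow_avg B (\<lambda>Y. f (X \<union> Y)))"
proof -
  have "(\<Sum>S\<in>Pow (A \<union> B). f S) = (\<Sum>(X, Y)\<in>Pow A \<times> Pow B. f (X \<union> Y))"
    by (rule sum.reindex_bij_witness[of _ "\<lambda>(X, Y). X \<union> Y" "\<lambda>S. (S \<inter> A, S \<inter> B)"])
       (use assms in \<open>auto simp: Int_absorb2 simp flip: Int_Un_distrib\<close>)
  also have "\<dots> = (\<Sum>X\<in>Pow A. \<Sum>Y\<in>Pow B. f (X \<union> Y))"
    by (rule sum.cartesian_product[symmetric])
  finally show ?thesis
    using assms unfolding pow_avg_def
    by (simp add: card_Un_disjoint power_add sum_divide_distrib[symmetric])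
qed

lemma pow_avg_disjoint:
  assumes "finite B" "C \<subseteq> B"
  shows "pow_avg B (\<lambda>Y. if Y \<inter> C = {} then 1 else 0) = 1 / 2 ^ card C"
proof -
  have "(\<Sum>Y\<in>Pow B. if Y \<inter> C = {} then 1 else 0 :: real) = card (Pow (B - C))"
    by (subst sum.If_cases) (auto intro!: arg_cong[where f = card] simp: assms(1))
  also have "\<dots> = (2::real) ^ (card B - card C)"
    using assms by (simp add: card_Pow card_Diff_subset finite_subset)
  also have "\<dots> = 2 ^ card B / 2 ^ card C"
    using assms by (simp add: power_diff card_mono)
  finally show ?thesis unfolding pow_avg_def by simp
qed

lemma pow_avg_if_disjoint:
  assumes "finite B" "C \<subseteq> B"
  shows "pow_avg B (\<lambda>Y. if Y \<inter> C = {} then a else b) = b + (a - b) / 2 ^ card C"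
proof -
  have "pow_avg B (\<lambda>Y. if Y \<inter> C = {} then a else b) =
        pow_avg B (\<lambda>Y. b + (a - b) * (if Y \<inter> C = {} then 1 else 0))"
    by (rule pow_avg_cong) simp
  then show ?thesis
    using assms by (simp add: pow_avg_add pow_avg_mult_left pow_avg_const pow_avg_disjoint)
qed

section \<open>An elementary renewal theorem\<close>

context
  fixes u q :: "nat \<Rightarrow> real"
  assumes u_nonneg: "\<And>k. 0 \<le> u k"
    and q_nonneg: "\<And>t. 0 \<le> q t"
    and summable_q: "summable q"
    and renewal: "\<And>n. 1 \<le> n \<Longrightarrow> (\<Sum>\<rho>=1..n. u \<rho> * q (n - \<rho>)) = 1"
begin

lemma renewal_partial_sums: "(\<Sum>\<rho>=1..n. u \<rho> * (\<Sum>t\<le>n - \<rho>. q t)) = real n"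
proof (induction n)
  case (Suc n)
  have "(\<Sum>\<rho>=1..Suc n. u \<rho> * (\<Sum>t\<le>Suc n - \<rho>. q t)) =
      (\<Sum>\<rho>=1..n. u \<rho> * (\<Sum>t\<le>n - \<rho>. q t)) + (\<Sum>\<rho>=1..Suc n. u \<rho> * q (Suc n - \<rho>))"
  proof -
    have "(\<Sum>t\<le>Suc n - \<rho>. q t) = (\<Sum>t\<le>n - \<rho>. q t) + q (Suc n - \<rho>)" if "\<rho> \<le> n" for \<rho>
      using that by (simp add: Suc_diff_le)
    then show ?thesis
      by (simp add: sum.distrib distrib_left)
  qed
  then show ?case using Suc.IH renewal[of "Suc n"] by simp
qed simp

lemma renewal_q0_pos: "0 < q 0"
  using renewal[of 1] q_nonneg[of 0] by (cases "q 0 = 0") auto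

lemma renewal_partial_sum_pos: "0 < (\<Sum>t\<le>K. q t)"
  using renewal_q0_pos by (rule order_less_le_trans) (auto intro: member_le_sum q_nonneg)

lemma renewal_suminf_pos: "0 < suminf q"
  using renewal_partial_sum_pos[of 0] sum_le_suminf[OF summable_q, of "{..0}"] q_nonneg
  by (simp add: order_less_le_trans)

lemma renewal_lower: "real n \<le> (\<Sum>k=1..n. u k) * suminf q"
proof -
  have "real n \<le> (\<Sum>\<rho>=1..n. u \<rho> * suminf q)"
    unfolding renewal_partial_sums[of n, symmetric]
    by (intro sum_mono mult_left_mono sum_le_suminf summable_q q_nonneg u_nonneg) auto
  then show ?thesis by (simp add: sum_distrib_right)
qed

lemma renewal_upper: "(\<Sum>t\<le>K. q t) * (\<Sum>k=1..n. u k) \<le> real (n + K)"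
proof -
  have "(\<Sum>t\<le>K. q t) * (\<Sum>k=1..n. u k) = (\<Sum>\<rho>=1..n. u \<rho> * (\<Sum>t\<le>K. q t))"
    by (simp add: sum_distrib_left mult.commute)
  also have "\<dots> \<le> (\<Sum>\<rho>=1..n. u \<rho> * (\<Sum>t\<le>n + K - \<rho>. q t))"
    by (intro sum_mono mult_left_mono sum_mono2 u_nonneg q_nonneg) auto
  also have "\<dots> \<le> (\<Sum>\<rho>=1..n + K. u \<rho> * (\<Sum>t\<le>n + K - \<rho>. q t))"
    by (intro sum_mono2) (auto intro!: mult_nonneg_nonneg sum_nonneg u_nonneg q_nonneg)
  also have "\<dots> = real (n + K)" by (rule renewal_partial_sums)
  finally show ?thesis .
qed

lemma elementary_renewal: "(\<lambda>n. (\<Sum>k=1..n. u k) / real n) \<longlonglongrightarrow> 1 / suminf q"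
proof (rule order_tendstoI)
  fix a assume "a < 1 / suminf q"
  moreover have "1 / suminf q \<le> (\<Sum>k=1..n. u k) / real n" if "1 \<le> n" for n
    using renewal_lower[of n] renewal_suminf_pos that by (simp add: field_simps)
  ultimately show "\<forall>\<^sub>F n in sequentially. a < (\<Sum>k=1..n. u k) / real n"
    unfolding eventually_sequentially by (auto intro: less_le_trans)
next
  fix b assume "1 / suminf q < b"
  have "(\<lambda>K. 1 / (\<Sum>t\<le>K. q t)) \<longlonglongrightarrow> 1 / suminf q"
    using renewal_suminf_pos by (intro tendsto_divide tendsto_const summable_LIMSEQ' summable_q) auto
  then obtain K where K: "1 / (\<Sum>t\<le>K. q t) < b"
    using \<open>1 / suminf q < b\<close> by (metis order_tendstoD(2) eventually_sequentially order_refl)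
  define c where "c = real K / (\<Sum>t\<le>K. q t)"
  have "(\<lambda>n. 1 / (\<Sum>t\<le>K. q t) + c / real n) \<longlonglongrightarrow> 1 / (\<Sum>t\<le>K. q t) + 0"
    by (intro tendsto_intros)
  then have "\<forall>\<^sub>F n in sequentially. 1 / (\<Sum>t\<le>K. q t) + c / real n < b"
    using K by (intro order_tendstoD(2)) auto
  moreover have "(\<Sum>k=1..n. u k) / real n \<le> 1 / (\<Sum>t\<le>K. q t) + c / real n" if "1 \<le> n" for n
    using renewal_upper[of K n] renewal_partial_sum_pos[of K] that unfolding c_def by (simp add: field_simps)
  ultimately show "\<forall>\<^sub>F n in sequentially. (\<Sum>k=1..n. u k) / real n < b"
    unfolding eventually_sequentially by (meson le_trans le_less_trans nat_le_linear)
qed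

end

lemma tendsto_shifted_ratio:
  fixes a :: "nat \<Rightarrow> real"
  assumes "(\<lambda>n. a n / real n) \<longlonglongrightarrow> L"
  shows "(\<lambda>n. (a n - c) / (real n - 1)) \<longlonglongrightarrow> L"
proof -
  have "(\<lambda>n. a n / real n * (real n / (real n - 1)) - c / (real n - 1)) \<longlonglongrightarrow> L * 1 - 0"
    by (intro tendsto_intros assms) real_asymp+
  moreover have "\<forall>\<^sub>F n in sequentially.
      a n / real n * (real n / (real n - 1)) - c / (real n - 1) = (a n - c) / (real n - 1)"
    using eventually_gt_at_top[of 1] by eventually_elim (simp add: diff_divide_distrib)
  ultimately show ?thesis by (simp add: tendsto_cong)
qed

section \<open>Maximum-weight paths\<close>

lemma zip_tl_snoc:
  "ys \<noteq> [] \<Longrightarrow> zip (ys @ [m]) (tl (ys @ [m])) = zip ys (tl ys) @ [(last ys, m)]"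
  by (induction ys rule: induct_list012) auto

lemma sorted_wrt_less_hd_last:
  fixes ys :: "'a::linorder list"
  assumes "sorted_wrt (<) ys" "y \<in> set ys"
  shows "hd ys \<le> y \<and> y \<le> last ys"
  using assms by (induction ys) (auto simp: less_imp_le)

lemma path_weight_snoc:
  "ys \<noteq> [] \<Longrightarrow>
    path_weight S (ys @ [m]) = path_weight S ys + (if (last ys, m) \<in> S then 1 else 0)"
  unfolding path_weight_def zip_tl_snoc by simp

lemma tt_paths_1: "tt_paths 1 = {[1]}"
proof (intro equalityI subsetI)
  fix xs assume xs: "xs \<in> tt_paths 1"
  then obtain ys where "xs = 1 # ys" "sorted_wrt (<) (1 # ys)" "last (1 # ys) = (1::nat)"
    unfolding tt_paths_def by (cases xs) auto
  moreover have "ys = []"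
    using calculation by (metis last_ConsR last_in_set less_irrefl sorted_wrt.simps(2))
  ultimately show "xs \<in> {[1]}" by simp
qed (simp add: tt_paths_def)

lemma tt_paths_Suc:
  assumes "1 \<le> n"
  shows "tt_paths (Suc n) = (\<Union>i\<in>{1..n}. (\<lambda>ys. ys @ [Suc n]) ` tt_paths i)"
proof (intro equalityI subsetI)
  fix xs assume "xs \<in> tt_paths (Suc n)"
  then have ne: "xs \<noteq> []" and hd: "hd xs = 1" and last: "last xs = Suc n"
    and sorted: "sorted_wrt (<) xs"
    unfolding tt_paths_def by auto
  define ys where "ys = butlast xs"
  have xs: "xs = ys @ [Suc n]"
    using ne last unfolding ys_def by (metis append_butlast_last_id)
  have "ys \<noteq> []" using xs hd assms by (cases ys) auto
  moreover have "\<forall>y\<in>set ys. y < Suc n" "sorted_wrt (<) ys"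
    using sorted unfolding xs by (auto simp: sorted_wrt_append)
  moreover have "hd ys = 1" using hd xs \<open>ys \<noteq> []\<close> by simp
  moreover from calculation have "last ys \<in> {1..n}"
    using sorted_wrt_less_hd_last[of ys "last ys"] by (auto simp: less_Suc_eq_le)
  ultimately have "ys \<in> tt_paths (last ys)" "last ys \<in> {1..n}"
    unfolding tt_paths_def by auto
  then show "xs \<in> (\<Union>i\<in>{1..n}. (\<lambda>ys. ys @ [Suc n]) ` tt_paths i)"
    using xs by blast
next
  fix xs assume "xs \<in> (\<Union>i\<in>{1..n}. (\<lambda>ys. ys @ [Suc n]) ` tt_paths i)"
  then obtain i ys where "i \<in> {1..n}" "ys \<in> tt_paths i" "xs = ys @ [Suc n]" by blast
  moreover have "\<forall>y\<in>set ys. y \<le> i" if "ys \<in> tt_paths i" for ys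
    using that sorted_wrt_less_hd_last unfolding tt_paths_def by fastforce
  ultimately show "xs \<in> tt_paths (Suc n)"
    unfolding tt_paths_def by (fastforce simp: sorted_wrt_append)
qed

definition path_weights :: "(nat \<times> nat) set \<Rightarrow> nat \<Rightarrow> nat set" where
  "path_weights S j = path_weight S ` tt_paths j"

lemma path_weights_1: "path_weights S 1 = {0}"
  unfolding path_weights_def tt_paths_1 by (simp add: path_weight_def)

lemma path_weights_Suc:
  assumes "1 \<le> n"
  shows "path_weights S (Suc n) =
    (\<Union>i\<in>{1..n}. (\<lambda>w. w + (if (i, Suc n) \<in> S then 1 else 0)) ` path_weights S i)"
proof -
  have "path_weight S (ys @ [Suc n]) = path_weight S ys + (if (i, Suc n) \<in> S then 1 else 0)"
    if "ys \<in> tt_paths i" for i ys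
    using that path_weight_snoc[of ys S "Suc n"] unfolding tt_paths_def by auto
  then show ?thesis
    unfolding path_weights_def tt_paths_Suc[OF assms] image_UN image_image by simp
qed

text \<open>front S n = (X(n), R(n)); the value at 0 only seeds the recursion.\<close>

primrec front :: "(nat \<times> nat) set \<Rightarrow> nat \<Rightarrow> nat \<times> nat" where
  "front S 0 = (0, 1)"
| "front S (Suc n) = (case front S n of (x, r) \<Rightarrow>
      if S \<inter> (\<lambda>i. (i, Suc n)) ` {r..n} = {} then (x, r) else (Suc x, Suc n))"

fun front_inv :: "(nat \<times> nat) set \<Rightarrow> nat \<Rightarrow> nat \<times> nat \<Rightarrow> bool" where
  "front_inv S n (x, r) \<longleftrightarrow> r \<in> {1..n} \<and>
     (\<forall>j\<in>{1..<r}. \<forall>w\<in>path_weights S j. w < x) \<and>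
     (\<forall>j\<in>{r..n}. x \<in> path_weights S j \<and> (\<forall>w\<in>path_weights S j. w \<le> x))"

lemma front_inv_Suc:
  assumes n: "1 \<le> n" and inv: "front_inv S n (x, r)"
  shows "front_inv S (Suc n) (if S \<inter> (\<lambda>i. (i, Suc n)) ` {r..n} = {} then (x, r) else (Suc x, Suc n))"
proof -
  let ?P = "path_weights S" and ?d = "\<lambda>i. if (i, Suc n) \<in> S then 1 else 0 :: nat"
  have r: "r \<in> {1..n}" and below: "\<And>j w. j \<in> {1..<r} \<Longrightarrow> w \<in> ?P j \<Longrightarrow> w < x"
    and attained: "\<And>j. j \<in> {r..n} \<Longrightarrow> x \<in> ?P j"
    and above: "\<And>j w. j \<in> {r..n} \<Longrightarrow> w \<in> ?P j \<Longrightarrow> w \<le> x"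
    using inv by auto
  have le: "w \<le> x" if "j \<in> {1..n}" "w \<in> ?P j" for j w
    using that below[of j w] above[of j w] by (cases "j < r") auto
  have P_Suc: "?P (Suc n) = (\<Union>i\<in>{1..n}. (\<lambda>w. w + ?d i) ` ?P i)"
    by (rule path_weights_Suc[OF n])
  show ?thesis
  proof (cases "S \<inter> (\<lambda>i. (i, Suc n)) ` {r..n} = {}")
    case True
    have "x \<in> ?P (Suc n)"
      using attained[of n] r True unfolding P_Suc by (force intro!: rev_image_eqI)
    moreover have "w \<le> x" if w: "w \<in> ?P (Suc n)" for w
    proof -
      obtain i v where "i \<in> {1..n}" "v \<in> ?P i" "w = v + ?d i"
        using w unfolding P_Suc by blast
      then show ?thesis
        using True below[of i v] le[of i v] by (cases "i < r") auto
    qed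
    ultimately show ?thesis
      using True r below attained above by (auto simp: le_Suc_eq)
  next
    case False
    then obtain i where i: "i \<in> {r..n}" "(i, Suc n) \<in> S" by blast
    have "Suc x \<in> ?P (Suc n)"
      using attained[OF i(1)] i r unfolding P_Suc by (force intro!: rev_image_eqI)
    moreover have "w \<le> Suc x" if "w \<in> ?P (Suc n)" for w
      using that le unfolding P_Suc by fastforce
    moreover have "w < Suc x" if "j \<in> {1..n}" "w \<in> ?P j" for j w
      using le[OF that] by simp
    ultimately show ?thesis
      using False by (auto simp: less_Suc_eq_le)
  qed
qed

lemma front_inv_front: "1 \<le> n \<Longrightarrow> front_inv S n (front S n)"
proof (induction n rule: dec_induct)
  case base
  show ?case using path_weights_1[of S] by simp
next
  case (step n)
  obtain x r where "front S n = (x, r)" by fastforce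
  then show ?case
    using front_inv_Suc[OF step.hyps(1)] step.IH by (simp del: front_inv.simps)
qed

lemma front_bounds: "1 \<le> n \<Longrightarrow> snd (front S n) \<in> {1..n}"
  using front_inv_front[of n S] by (cases "front S n") simp

lemma max_path_weight_front:
  assumes "1 \<le> n"
  shows "max_path_weight n S = fst (front S n)"
proof -
  obtain x r where xr: "front S n = (x, r)" by fastforce
  then have "r \<in> {1..n}" "x \<in> path_weights S n" "\<forall>w\<in>path_weights S n. w \<le> x"
    using front_inv_front[OF assms, of S] by auto
  moreover from this have "finite (path_weights S n)"
    using finite_subset[of _ "{..x}"] by blast
  ultimately show ?thesis
    unfolding max_path_weight_def path_weights_def[symmetric] xr by (auto intro: Max_eqI)
qed

section \<open>The renewal structure of the maximum\<close>

lemma finite_tt_edges: "finite (tt_edges n)"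
  by (rule finite_subset[of _ "{1..n} \<times> {1..n}"]) (auto simp: tt_edges_def)

lemma tt_edges_Suc: "tt_edges (Suc n) = tt_edges n \<union> (\<lambda>i. (i, Suc n)) ` {1..n}"
  unfolding tt_edges_def by (auto simp: le_Suc_eq)

lemma front_cong:
  "(\<And>i j. j \<le> n \<Longrightarrow> (i, j) \<in> S \<longleftrightarrow> (i, j) \<in> S') \<Longrightarrow> front S n = front S' n"
proof (induction n)
  case (Suc n)
  then have "front S n = front S' n" by simp
  moreover have "S \<inter> (\<lambda>i. (i, Suc n)) ` {r..n} = S' \<inter> (\<lambda>i. (i, Suc n)) ` {r..n}" for r
    using Suc.prems by auto
  ultimately show ?case by simp
qed simp

lemma front_Suc_Un:
  assumes "S \<subseteq> tt_edges n" "Y \<subseteq> (\<lambda>i. (i, Suc n)) ` {1..n}" "front S n = (x, r)"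
  shows "front (S \<union> Y) (Suc n) =
    (if Y \<inter> (\<lambda>i. (i, Suc n)) ` {r..n} = {} then (x, r) else (Suc x, Suc n))"
proof -
  have "front (S \<union> Y) n = front S n"
    by (rule front_cong) (use assms(1,2) in \<open>auto simp: tt_edges_def\<close>)
  moreover have "(S \<union> Y) \<inter> (\<lambda>i. (i, Suc n)) ` {r..n} = Y \<inter> (\<lambda>i. (i, Suc n)) ` {r..n}"
    using assms(1) by (auto simp: tt_edges_def)
  ultimately show ?thesis using assms(3) by simp
qed

lemma pow_avg_front_Suc:
  assumes "1 \<le> n"
  shows "pow_avg (tt_edges (Suc n)) (\<lambda>S. g (front S (Suc n))) =
    pow_avg (tt_edges n) (\<lambda>S. case front S n of (x, r) \<Rightarrow>
      g (Suc x, Suc n) + (g (x, r) - g (Suc x, Suc n)) / 2 ^ (Suc n - r))"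
proof -
  let ?N = "(\<lambda>i. (i, Suc n)) ` {1..n}"
  have "pow_avg (tt_edges (Suc n)) (\<lambda>S. g (front S (Suc n))) =
        pow_avg (tt_edges n) (\<lambda>S. pow_avg ?N (\<lambda>Y. g (front (S \<union> Y) (Suc n))))"
    unfolding tt_edges_Suc by (rule pow_avg_Un[OF finite_tt_edges]) (auto simp: tt_edges_def)
  also have "\<dots> = pow_avg (tt_edges n) (\<lambda>S. case front S n of (x, r) \<Rightarrow>
      g (Suc x, Suc n) + (g (x, r) - g (Suc x, Suc n)) / 2 ^ (Suc n - r))"
  proof (rule pow_avg_cong)
    fix S assume S: "S \<subseteq> tt_edges n"
    obtain x r where xr: "front S n = (x, r)" by fastforce
    let ?C = "(\<lambda>i. (i, Suc n)) ` {r..n}"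
    have r: "r \<in> {1..n}" using front_bounds[OF assms, of S] xr by simp
    have "card ?C = Suc n - r" by (simp add: card_image inj_on_def)
    moreover have "pow_avg ?N (\<lambda>Y. g (front (S \<union> Y) (Suc n))) =
        pow_avg ?N (\<lambda>Y. if Y \<inter> ?C = {} then g (x, r) else g (Suc x, Suc n))"
      by (rule pow_avg_cong) (simp add: front_Suc_Un[OF S _ xr] del: front.simps)
    moreover have "?C \<subseteq> ?N" using r by auto
    ultimately show "pow_avg ?N (\<lambda>Y. g (front (S \<union> Y) (Suc n))) =
      (case front S n of (x, r) \<Rightarrow> g (Suc x, Suc n) + (g (x, r) - g (Suc x, Suc n)) / 2 ^ (Suc n - r))"
      using xr by (simp add: pow_avg_if_disjoint)
  qed
  finally show ?thesis .
qed

text \<open>leader_prob n \<rho> = P(R(n) = \<rho>); renewal_prob is u and stay_prob is q.\<close>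

definition leader_prob :: "nat \<Rightarrow> nat \<Rightarrow> real" where
  "leader_prob n \<rho> = pow_avg (tt_edges n) (\<lambda>S. if snd (front S n) = \<rho> then 1 else 0)"

definition renewal_prob :: "nat \<Rightarrow> real" where
  "renewal_prob k = leader_prob k k"

definition stay_prob :: "nat \<Rightarrow> real" where
  "stay_prob t = 1 / 2 ^ (Suc t choose 2)"

lemma stay_prob_0: "stay_prob 0 = 1"
  by (simp add: stay_prob_def binomial_eq_0)

lemma stay_prob_pos: "0 < stay_prob t"
  by (simp add: stay_prob_def)

lemma stay_prob_Suc: "stay_prob (Suc t) = stay_prob t / 2 ^ Suc t"
proof -
  have "Suc (Suc t) choose 2 = (Suc t choose 2) + Suc t"
    using binomial_Suc_Suc[of "Suc t" 1] by (simp add: numeral_2_eq_2)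
  then show ?thesis unfolding stay_prob_def by (simp add: power_add)
qed

lemma stay_prob_le: "stay_prob t \<le> (1 / 2) ^ t"
proof (induction t)
  case (Suc t)
  have "stay_prob (Suc t) \<le> stay_prob t / 2"
    unfolding stay_prob_Suc by (rule divide_left_mono) (auto simp: stay_prob_def self_le_power)
  with Suc show ?case by simp
qed (simp add: stay_prob_0)

lemma summable_stay_prob: "summable stay_prob"
  by (rule summable_comparison_test'[of "\<lambda>t. (1 / 2) ^ t" 0])
     (simp_all add: stay_prob_le abs_of_pos[OF stay_prob_pos])

lemma renewal_prob_nonneg: "0 \<le> renewal_prob k"
  unfolding renewal_prob_def leader_prob_def by (rule pow_avg_nonneg) simp

lemma leader_prob_Suc:
  assumes "1 \<le> n" "\<rho> \<le> n"
  shows "leader_prob (Suc n) \<rho> = leader_prob n \<rho> / 2 ^ (Suc n - \<rho>)"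
proof -
  have "leader_prob (Suc n) \<rho> = pow_avg (tt_edges n) (\<lambda>S. case front S n of (x, r) \<Rightarrow>
      (if Suc n = \<rho> then 1 else 0) +
      ((if r = \<rho> then 1 else 0) - (if Suc n = \<rho> then 1 else 0)) / 2 ^ (Suc n - r))"
    unfolding leader_prob_def
    using pow_avg_front_Suc[OF assms(1), of "\<lambda>p. if snd p = \<rho> then 1 else 0"] by simp
  also have "\<dots> =
      pow_avg (tt_edges n) (\<lambda>S. (if snd (front S n) = \<rho> then 1 else 0) / 2 ^ (Suc n - \<rho>))"
    using assms(2) by (intro pow_avg_cong) (auto split: prod.split)
  finally show ?thesis unfolding pow_avg_divide leader_prob_def .
qed

lemma leader_prob_eq:
  assumes "1 \<le> \<rho>" "\<rho> \<le> n"
  shows "leader_prob n \<rho> = renewal_prob \<rho> * stay_prob (n - \<rho>)"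
  using assms(2)
proof (induction n rule: dec_induct)
  case (step n)
  then have "Suc n - \<rho> = Suc (n - \<rho>)" by simp
  with step assms(1) show ?case by (simp add: leader_prob_Suc stay_prob_Suc)
qed (simp add: renewal_prob_def stay_prob_0)

lemma sum_leader_prob:
  assumes "1 \<le> n"
  shows "(\<Sum>\<rho>=1..n. leader_prob n \<rho>) = 1"
proof -
  have "(\<Sum>\<rho>=1..n. leader_prob n \<rho>) = pow_avg (tt_edges n) (\<lambda>S. 1)"
    unfolding leader_prob_def pow_avg_sum[symmetric]
    by (rule pow_avg_cong) (use front_bounds[OF assms] in simp)
  then show ?thesis by (simp add: pow_avg_const finite_tt_edges)
qed

lemma renewal_equation: "1 \<le> n \<Longrightarrow> (\<Sum>\<rho>=1..n. renewal_prob \<rho> * stay_prob (n - \<rho>)) = 1"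
  using sum_leader_prob[of n] leader_prob_eq[of _ n] by simp

lemma renewal_prob_Suc:
  assumes "1 \<le> n"
  shows "renewal_prob (Suc n) = pow_avg (tt_edges n) (\<lambda>S. 1 - 1 / 2 ^ (Suc n - snd (front S n)))"
proof -
  have "front S n \<noteq> (x, Suc n)" for S x
    using front_bounds[OF assms, of S] by auto
  then show ?thesis
    unfolding renewal_prob_def leader_prob_def
      pow_avg_front_Suc[OF assms, of "\<lambda>p. if snd p = Suc n then 1 else 0"]
    by (intro pow_avg_cong) (auto split: prod.split)
qed

lemma expected_max_weight_front:
  "1 \<le> n \<Longrightarrow> expected_max_weight n = pow_avg (tt_edges n) (\<lambda>S. real (fst (front S n)))"
  unfolding expected_max_weight_def pow_avg_def by (simp add: max_path_weight_front)

lemma expected_max_weight_Suc: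
  assumes "1 \<le> n"
  shows "expected_max_weight (Suc n) = expected_max_weight n + renewal_prob (Suc n)"
proof -
  have "expected_max_weight (Suc n) =
      pow_avg (tt_edges n) (\<lambda>S. real (fst (front S n)) + (1 - 1 / 2 ^ (Suc n - snd (front S n))))"
    unfolding expected_max_weight_front[OF le_SucI[OF assms]]
      pow_avg_front_Suc[OF assms, of "\<lambda>p. real (fst p)"]
    by (intro pow_avg_cong) (auto split: prod.split simp: diff_divide_distrib)
  then show ?thesis
    unfolding pow_avg_add expected_max_weight_front[OF assms] renewal_prob_Suc[OF assms] .
qed

lemma expected_max_weight_eq:
  "1 \<le> n \<Longrightarrow> expected_max_weight n = (\<Sum>k=1..n. renewal_prob k) - 1"
proof (induction n rule: dec_induct)
  case base
  have "tt_edges 1 = {}" by (auto simp: tt_edges_def)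
  then show ?case
    by (simp add: expected_max_weight_front renewal_prob_def leader_prob_def pow_avg_def)
qed (simp add: expected_max_weight_Suc)

theorem corollary6:
  shows "(\<lambda>n. expected_max_weight n / (real n - 1)) \<longlonglongrightarrow>
           1 / (\<Sum>k. 1 / 2 ^ (Suc k choose 2))"
proof -
  have "(\<lambda>n. (\<Sum>k=1..n. renewal_prob k) / real n) \<longlonglongrightarrow> 1 / suminf stay_prob"
    using renewal_prob_nonneg stay_prob_pos summable_stay_prob renewal_equation
    by (intro elementary_renewal) (auto intro: less_imp_le)
  then have "(\<lambda>n. ((\<Sum>k=1..n. renewal_prob k) - 1) / (real n - 1)) \<longlonglongrightarrow> 1 / suminf stay_prob"
    by (rule tendsto_shifted_ratio)
  moreover have "\<forall>\<^sub>F n in sequentially. ((\<Sum>k=1..n. renewal_prob k) - 1) / (real n - 1) =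
      expected_max_weight n / (real n - 1)"
    using eventually_ge_at_top[of 1] by eventually_elim (simp add: expected_max_weight_eq)
  ultimately show ?thesis
    unfolding stay_prob_def[abs_def] by (rule Lim_transform_eventually)
qed

end
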